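(* Let $X$ be a real topological vector space and let $f:X\times X\to\mathbb{R}$ be a bifunction such that for each $x\in X$ the function $-f(x,\cdot)$ is semi-strictly quasi-convex, and $f(x,x)=0$ for all $x\in X$. If $f$ has the star finite intersection property (fip$^*$) on $X$, then $f$ is quasi-monotone on $X$.
   Context: A function $h:X\to\mathbb{R}\cup\{+\infty\}$ is quasi-convex if every sublevel set $\{x\in X: h(x)\leq\lambda\}$, $\lambda\in\mathbb{R}$, is convex; it is semi-strictly quasi-convex if it is quasi-convex and for all $x,y\in X$ with $h(x)\neq h(y)$ one has $h(tx+(1-t)y)<\max\{h(x),h(y)\}$ for all $t\in\,]0,1[$. The bifunction $f$ has the fip$^*$ on a convex set $C$ if for every finite non-empty subset $A$ of $C$ there exists $x\in\operatorname{co}(A)$ with $\max_{a\in A}f(a,x)\leq 0$. The bifunction $f$ is quasi-monotone on $C$ if for all $x,y\in C$, $f(x,y)>0$ implies $f(y,x)\leq 0$. *)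

theory Defs
  imports "HOL-Analysis.Analysis"
begin

definition quasi_convex_on :: "'a::real_vector set \<Rightarrow> ('a \<Rightarrow> real) \<Rightarrow> bool" where
  "quasi_convex_on C h \<longleftrightarrow> (\<forall>c::real. convex {x \<in> C. h x \<le> c})"

definition semistrictly_quasi_convex_on :: "'a::real_vector set \<Rightarrow> ('a \<Rightarrow> real) \<Rightarrow> bool" where
  "semistrictly_quasi_convex_on C h \<longleftrightarrow> quasi_convex_on C h \<and>
     (\<forall>x\<in>C. \<forall>y\<in>C. h x \<noteq> h y \<longrightarrow>
        (\<forall>t::real. 0 < t \<and> t < 1 \<longrightarrow> h (t *\<^sub>R x + (1 - t) *\<^sub>R y) < max (h x) (h y)))"

definition fip_star :: "('a::real_vector \<Rightarrow> 'a \<Rightarrow> real) \<Rightarrow> 'a set \<Rightarrow> bool" where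
  "fip_star f C \<longleftrightarrow> (\<forall>A. finite A \<and> A \<noteq> {} \<and> A \<subseteq> C \<longrightarrow>
      (\<exists>x \<in> convex hull A. Max ((\<lambda>a. f a x) ` A) \<le> 0))"

definition quasi_monotone_on :: "('a \<Rightarrow> 'a \<Rightarrow> real) \<Rightarrow> 'a set \<Rightarrow> bool" where
  "quasi_monotone_on f C \<longleftrightarrow> (\<forall>x\<in>C. \<forall>y\<in>C. f x y > 0 \<longrightarrow> f y x \<le> 0)"

end

theory Submission
  imports Defs
begin

text \<open>If f(x,y) > 0 = f(x,x), semi-strict quasi-concavity of f(x,\<cdot>) keeps f(x,\<cdot>) positive on the
  segment from y up to, but excluding, x. Applying fip* to the pair {x,y} yields a point z of
  that segment with f(x,z) \<le> 0 and f(y,z) \<le> 0, so z must be x, and then f(y,x) \<le> 0.\<close>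

lemma fip_star_pair:
  assumes "fip_star f C" "x \<in> C" "y \<in> C"
  obtains t where "0 \<le> t" "t \<le> 1"
    "f x (t *\<^sub>R x + (1 - t) *\<^sub>R y) \<le> 0" "f y (t *\<^sub>R x + (1 - t) *\<^sub>R y) \<le> 0"
proof -
  obtain z where z: "z \<in> convex hull {x, y}" and max: "Max ((\<lambda>a. f a z) ` {x, y}) \<le> 0"
    using assms unfolding fip_star_def by (elim allE[of _ "{x, y}"]) auto
  from z obtain t where "0 \<le> t" "t \<le> 1" "z = t *\<^sub>R x + (1 - t) *\<^sub>R y"
    unfolding convex_hull_2 by (auto simp: eq_diff_eq')
  with max show thesis
    by (intro that) auto
qed

lemma semistrictly_quasiconcave_section_pos_on_segment:
  assumes "semistrictly_quasi_convex_on C (\<lambda>z. - f x z)" "x \<in> C" "y \<in> C"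
    and "f x x = 0" "f x y > 0" "0 \<le> t" "t < 1"
  shows "f x (t *\<^sub>R x + (1 - t) *\<^sub>R y) > 0"
proof (cases "t = 0")
  case True
  with assms show ?thesis by simp
next
  case False
  with assms have "- f x (t *\<^sub>R x + (1 - t) *\<^sub>R y) < max (- f x x) (- f x y)"
    unfolding semistrictly_quasi_convex_on_def by force
  with assms show ?thesis by simp
qed

theorem proposition3p2:
  fixes f :: "'a::{real_vector, topological_space} \<Rightarrow> 'a \<Rightarrow> real"
  assumes "\<And>x. semistrictly_quasi_convex_on UNIV (\<lambda>y. - f x y)"
    and "\<And>x. f x x = 0"
    and "fip_star f UNIV"
  shows "quasi_monotone_on f UNIV"
  unfolding quasi_monotone_on_def
proof (intro ballI impI)
  fix x y assume pos: "f x y > 0"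
  obtain t where t: "0 \<le> t" "t \<le> 1"
    and fx: "f x (t *\<^sub>R x + (1 - t) *\<^sub>R y) \<le> 0" and fy: "f y (t *\<^sub>R x + (1 - t) *\<^sub>R y) \<le> 0"
    using fip_star_pair[OF assms(3)] by blast
  have "t = 1"
  proof (rule ccontr)
    assume "t \<noteq> 1"
    with t have "f x (t *\<^sub>R x + (1 - t) *\<^sub>R y) > 0"
      by (intro semistrictly_quasiconcave_section_pos_on_segment[OF assms(1)] assms(2) pos) auto
    with fx show False by simp
  qed
  with fy show "f y x \<le> 0" by simp
qed

end
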